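(* Let $\mathcal{C}$ be a binary linear $[n,k,d]$ code, let $d^{\perp}$ denote the minimum distance of the dual code $\mathcal{C}^{\perp}$, and for $\sigma=1,\ldots,d-1$ put $$\omega_{\sigma}=\max\left\{\left\lceil \frac{n+1}{\sigma}\right\rceil-1,\; d^{\perp}\right\}.$$ Then for every $\ell$ with $1\le \ell\le d$, $$\rho_{\ell}(\mathcal{C})\;\ge\;\max\left(n-k,\;\max_{\sigma\in\{1,\ldots,\ell-1\}}\frac{\binom{n}{\sigma}}{\omega_{\sigma}\binom{n-\omega_{\sigma}}{\sigma-1}}\right).$$
   Context: Let $\mathbf{H}$ be a binary matrix with $n$ columns indexed by $J=\{0,\ldots,n-1\}$. For a nonempty $I\subseteq J$, a row of $\mathbf{H}$ is said to resolve $I$ if its restriction to the columns in $I$ has Hamming weight exactly one. A nonempty set $I\subseteq J$ is a stopping set of $\mathbf{H}$ if no row of $\mathbf{H}$ resolves $I$. The stopping distance of $\mathbf{H}$ is the minimum size of a stopping set of $\mathbf{H}$. A (possibly redundant) parity-check matrix of a binary linear code $\mathcal{C}$ of length $n$ is a binary matrix with $n$ columns whose row space equals $\mathcal{C}^{\perp}$. For $\ell\le d$, the $\ell$-th stopping redundancy $\rho_{\ell}(\mathcal{C})$ is the smallest number of rows of a (possibly redundant) parity-check matrix of $\mathcal{C}$ with stopping distance at least $\ell$. *)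

theory Defs
  imports Complex_Main "HOL-Library.Extended_Nat"
begin

text \<open>Binary vectors of length n are identified with their supports, i.e. subsets
  of J = {0..<n}; vector addition over GF(2) is symmetric difference.
  A binary matrix with n columns is a list of rows, each row a subset of {0..<n}
  (repeated rows allowed; the number of rows is the length of the list).\<close>

definition binary_linear_code :: "nat \<Rightarrow> nat set set \<Rightarrow> bool" where
  "binary_linear_code n C \<longleftrightarrow>
     (\<forall>x\<in>C. x \<subseteq> {0..<n}) \<and> {} \<in> C \<and>
     (\<forall>x\<in>C. \<forall>y\<in>C. (x - y) \<union> (y - x) \<in> C)"

text \<open>Hamming weight of a vector = card of its support; minimum distance of a
  linear code = minimum weight of a nonzero codeword.\<close>
definition min_dist :: "nat set set \<Rightarrow> nat" where
  "min_dist C = Inf (card ` (C - {{}}))"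

definition dual_code :: "nat \<Rightarrow> nat set set \<Rightarrow> nat set set" where
  "dual_code n C = {y. y \<subseteq> {0..<n} \<and> (\<forall>x\<in>C. even (card (x \<inter> y)))}"

definition row_sum :: "nat set list \<Rightarrow> nat set \<Rightarrow> nat set" where
  "row_sum H I = {j. odd (card {i\<in>I. j \<in> H ! i})}"

definition row_space :: "nat set list \<Rightarrow> nat set set" where
  "row_space H = {row_sum H I | I. I \<subseteq> {0..<length H}}"

definition parity_check_matrix :: "nat \<Rightarrow> nat set set \<Rightarrow> nat set list \<Rightarrow> bool" where
  "parity_check_matrix n C H \<longleftrightarrow>
     (\<forall>r\<in>set H. r \<subseteq> {0..<n}) \<and> row_space H = dual_code n C"

definition resolves :: "nat set \<Rightarrow> nat set \<Rightarrow> bool" where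
  "resolves r I \<longleftrightarrow> card (r \<inter> I) = 1"

definition stopping_set :: "nat \<Rightarrow> nat set list \<Rightarrow> nat set \<Rightarrow> bool" where
  "stopping_set n H I \<longleftrightarrow> I \<noteq> {} \<and> I \<subseteq> {0..<n} \<and> (\<forall>r\<in>set H. \<not> resolves r I)"

text \<open>Stopping distance (infinite if there is no stopping set).\<close>
definition stopping_distance :: "nat \<Rightarrow> nat set list \<Rightarrow> enat" where
  "stopping_distance n H = Inf ((\<lambda>I. enat (card I)) ` {I. stopping_set n H I})"

definition stopping_redundancy :: "nat \<Rightarrow> nat set set \<Rightarrow> nat \<Rightarrow> nat" where
  "stopping_redundancy n C l =
     (LEAST m. \<exists>H. length H = m \<and> parity_check_matrix n C H \<and>
                    stopping_distance n H \<ge> enat l)"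

definition omega :: "nat \<Rightarrow> nat set set \<Rightarrow> nat \<Rightarrow> nat" where
  "omega n C \<sigma> = max (nat \<lceil>real (n + 1) / real \<sigma>\<rceil> - 1) (min_dist (dual_code n C))"

end

theory Submission
  imports Defs
begin

(* The bound  rho_l >= n - k  is a rank argument: every parity-check matrix H of C spans
   the dual code, which has 2^(n-k) elements, while the row space of H has at most
   2^(length H) elements.  The dual-code size comes from the character-sum identity
   |C| * |C^perp| = 2^n, proved for GF(2)-subspaces of the power set of any finite U.
   The second bound is a covering argument.  If H has stopping distance >= l and
   sigma < l, every sigma-subset of the columns is resolved by some row of H.  A row of
   weight w resolves at most  w * binom(n-w, sigma-1)  sigma-subsets; as a function of w
   this count is unimodal with maximum at  n div sigma, and every nonzero row of H is a
   dual codeword, hence has weight >= d^perp.  So each row resolves at most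
   omega * binom(n-omega, sigma-1) sets, and  binom(n, sigma) <= |H| * that bound.
   The optimal matrix exists because the list of all dual codewords is a parity-check
   matrix of stopping distance >= d (a puncturing argument using double duality). *)

section \<open>GF(2) subspaces of a power set and their orthogonal complements\<close>

definition gf2_space :: "nat set \<Rightarrow> nat set set \<Rightarrow> bool" where
  "gf2_space U C \<longleftrightarrow> (\<forall>x\<in>C. x \<subseteq> U) \<and> {} \<in> C \<and> (\<forall>x\<in>C. \<forall>y\<in>C. (x - y) \<union> (y - x) \<in> C)"

definition orth :: "nat set \<Rightarrow> nat set set \<Rightarrow> nat set set" where
  "orth U C = {y. y \<subseteq> U \<and> (\<forall>x\<in>C. even (card (x \<inter> y)))}"

lemma binary_linear_code_iff: "binary_linear_code n C \<longleftrightarrow> gf2_space {0..<n} C"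
  unfolding binary_linear_code_def gf2_space_def by auto

lemma dual_code_eq_orth: "dual_code n C = orth {0..<n} C"
  unfolding dual_code_def orth_def by auto

lemma gf2_space_finite: "gf2_space U C \<Longrightarrow> finite U \<Longrightarrow> finite C"
  unfolding gf2_space_def by (meson Pow_iff finite_Pow_iff rev_finite_subset subsetI)

lemma card_symdiff:
  assumes "finite A" "finite B"
  shows "card ((A - B) \<union> (B - A)) + 2 * card (A \<inter> B) = card A + card B"
proof -
  have e: "(A - B) \<union> (B - A) = (A \<union> B) - (A \<inter> B)" by blast
  have "card ((A \<union> B) - (A \<inter> B)) = card (A \<union> B) - card (A \<inter> B)"
    by (rule card_Diff_subset) (use assms in auto)
  moreover have "card (A \<inter> B) \<le> card (A \<union> B)" by (rule card_mono) (use assms in auto)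
  moreover have "card A + card B = card (A \<union> B) + card (A \<inter> B)"
    using card_Un_Int[OF assms] .
  ultimately show ?thesis unfolding e by linarith
qed

lemma even_card_Int_symdiff:
  assumes "finite z"
  shows "even (card (z \<inter> ((a - b) \<union> (b - a)))) \<longleftrightarrow> (even (card (z \<inter> a)) \<longleftrightarrow> even (card (z \<inter> b)))"
proof -
  have e: "z \<inter> ((a - b) \<union> (b - a)) = ((z \<inter> a) - (z \<inter> b)) \<union> ((z \<inter> b) - (z \<inter> a))" by blast
  have "card ((z \<inter> a - z \<inter> b) \<union> (z \<inter> b - z \<inter> a)) + 2 * card ((z \<inter> a) \<inter> (z \<inter> b))
        = card (z \<inter> a) + card (z \<inter> b)"
    by (rule card_symdiff) (use assms in auto)
  thus ?thesis unfolding e by presburger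
qed

lemma sign_card_Int_symdiff:
  assumes "finite z"
  shows "(-1::int) ^ card (z \<inter> ((a - b) \<union> (b - a))) = (-1) ^ card (z \<inter> a) * (-1) ^ card (z \<inter> b)"
  using even_card_Int_symdiff[OF assms, of a b] by (auto simp: minus_one_power_iff)

text \<open>A nontrivial character sums to zero over a subspace: translation by a codeword x0
  with odd intersection with y is a bijection flipping every summand's sign.\<close>
lemma character_sum_space:
  assumes C: "gf2_space U C" and U: "finite U" and y: "y \<subseteq> U"
    and x0: "x0 \<in> C" and odd: "odd (card (x0 \<inter> y))"
  shows "(\<Sum>x\<in>C. (-1::int) ^ card (y \<inter> x)) = 0"
proof -
  let ?g = "\<lambda>x. (x - x0) \<union> (x0 - x)"
  have bij: "bij_betw ?g C C"
    by (rule bij_betw_byWitness[where f'="?g"]) (use C x0 in \<open>auto simp: gf2_space_def\<close>)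
  have fy: "finite y" using y U finite_subset by blast
  have "(\<Sum>x\<in>C. (-1::int) ^ card (y \<inter> ?g x)) = (\<Sum>x\<in>C. (-1::int) ^ card (y \<inter> x))"
    using sum.reindex_bij_betw[OF bij] .
  moreover have "(-1::int) ^ card (y \<inter> ?g x) = - ((-1::int) ^ card (y \<inter> x))" for x
    using sign_card_Int_symdiff[OF fy, of x x0] odd by (simp add: Int_commute)
  ultimately show ?thesis by (simp add: sum_negf)
qed

lemma character_sum_Pow:
  assumes U: "finite U" and x: "x \<subseteq> U" and j: "j \<in> x"
  shows "(\<Sum>y\<in>Pow U. (-1::int) ^ card (x \<inter> y)) = 0"
proof -
  let ?g = "\<lambda>y. (y - {j}) \<union> ({j} - y)"
  have bij: "bij_betw ?g (Pow U) (Pow U)"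
    by (rule bij_betw_byWitness[where f'="?g"]) (use x j in auto)
  have fx: "finite x" using x U finite_subset by blast
  have "(\<Sum>y\<in>Pow U. (-1::int) ^ card (x \<inter> ?g y)) = (\<Sum>y\<in>Pow U. (-1::int) ^ card (x \<inter> y))"
    using sum.reindex_bij_betw[OF bij] .
  moreover have "(-1::int) ^ card (x \<inter> ?g y) = - ((-1::int) ^ card (x \<inter> y))" for y
    using sign_card_Int_symdiff[OF fx, of y "{j}"] j by (simp add: Int_absorb1)
  ultimately show ?thesis by (simp add: sum_negf)
qed

text \<open>Dimension formula |C| * |C^perp| = 2^|U|, by evaluating the double character sum
  over Pow U \<times> C in both orders.\<close>
lemma card_orth:
  assumes C: "gf2_space U C" and U: "finite U"
  shows "card C * card (orth U C) = 2 ^ card U"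
proof -
  define D where "D = orth U C"
  define S where "S = (\<Sum>y\<in>Pow U. \<Sum>x\<in>C. (-1::int) ^ card (y \<inter> x))"
  have "S = (\<Sum>y\<in>D. \<Sum>x\<in>C. (-1::int) ^ card (y \<inter> x))"
    unfolding S_def
  proof (rule sum.mono_neutral_right)
    show "\<forall>y\<in>Pow U - D. (\<Sum>x\<in>C. (-1::int) ^ card (y \<inter> x)) = 0"
    proof
      fix y assume "y \<in> Pow U - D"
      then obtain x0 where "x0 \<in> C" "odd (card (x0 \<inter> y))" "y \<subseteq> U"
        unfolding D_def orth_def by auto
      thus "(\<Sum>x\<in>C. (-1::int) ^ card (y \<inter> x)) = 0" using character_sum_space[OF C U] by blast
    qed
  qed (use U in \<open>auto simp: D_def orth_def\<close>)
  also have "\<dots> = (\<Sum>y\<in>D. int (card C))"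
  proof (rule sum.cong)
    fix y assume "y \<in> D"
    hence "\<forall>x\<in>C. even (card (y \<inter> x))" unfolding D_def orth_def by (auto simp: Int_commute)
    hence "(\<Sum>x\<in>C. (-1::int) ^ card (y \<inter> x)) = (\<Sum>x\<in>C. 1)" by (intro sum.cong) auto
    thus "(\<Sum>x\<in>C. (-1::int) ^ card (y \<inter> x)) = int (card C)" by simp
  qed simp
  finally have S_dual: "S = int (card C * card D)" by simp
  have "S = (\<Sum>x\<in>C. \<Sum>y\<in>Pow U. (-1::int) ^ card (x \<inter> y))"
    unfolding S_def by (subst sum.swap) (simp add: Int_commute)
  also have "\<dots> = (\<Sum>x\<in>{{}}. \<Sum>y\<in>Pow U. (-1::int) ^ card (x \<inter> y))"
  proof (rule sum.mono_neutral_right)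
    show "\<forall>x\<in>C - {{}}. (\<Sum>y\<in>Pow U. (-1::int) ^ card (x \<inter> y)) = 0"
    proof
      fix x assume x: "x \<in> C - {{}}"
      then obtain j where "j \<in> x" by auto
      moreover have "x \<subseteq> U" using x C unfolding gf2_space_def by auto
      ultimately show "(\<Sum>y\<in>Pow U. (-1::int) ^ card (x \<inter> y)) = 0"
        using character_sum_Pow[OF U] by blast
    qed
  qed (use gf2_space_finite[OF C U] C in \<open>auto simp: gf2_space_def\<close>)
  also have "\<dots> = int (2 ^ card U)" using U by (simp add: card_Pow)
  finally show ?thesis using S_dual unfolding D_def by linarith
qed

lemma gf2_space_orth:
  assumes U: "finite U"
  shows "gf2_space U (orth U C)"
  unfolding gf2_space_def
proof (intro conjI ballI)
  fix a b assume a: "a \<in> orth U C" and b: "b \<in> orth U C"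
  have "even (card (x \<inter> ((a - b) \<union> (b - a))))" if x: "x \<in> C" for x
  proof -
    have "x \<inter> U \<inter> a = x \<inter> a" "x \<inter> U \<inter> b = x \<inter> b"
      "x \<inter> U \<inter> ((a - b) \<union> (b - a)) = x \<inter> ((a - b) \<union> (b - a))"
      using a b by (auto simp: orth_def)
    thus ?thesis using even_card_Int_symdiff[of "x \<inter> U" a b] U a b x
      by (auto simp: orth_def)
  qed
  thus "(a - b) \<union> (b - a) \<in> orth U C" using a b by (auto simp: orth_def)
qed (auto simp: orth_def)

text \<open>Double duality: C \<subseteq> C^perp^perp, and both have the same size by the dimension formula.\<close>
lemma orth_orth:
  assumes C: "gf2_space U C" and U: "finite U"
  shows "orth U (orth U C) = C"
proof -
  let ?D = "orth U C"
  have sub: "C \<subseteq> orth U ?D"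
    using C unfolding gf2_space_def orth_def by (auto simp: Int_commute)
  have "card (orth U ?D) * card ?D = card C * card ?D"
    using card_orth[OF gf2_space_orth[OF U] U] card_orth[OF C U] by (simp add: mult.commute)
  moreover have "card ?D > 0"
    using gf2_space_finite[OF gf2_space_orth[OF U] U] by (auto simp: card_gt_0_iff orth_def)
  ultimately have "card (orth U ?D) = card C" by simp
  thus ?thesis using sub gf2_space_finite[OF gf2_space_orth[OF U] U] by (metis card_subset_eq)
qed

text \<open>Puncturing: if every nonzero codeword of C is larger than I, the restrictions of the
  dual codewords to I are all of Pow I.  (Their orthogonal complement inside I consists of
  codewords of C supported in I, hence only of the empty set.)\<close>
lemma orth_restrict_surj:
  assumes C: "gf2_space U C" and U: "finite U" and I: "I \<subseteq> U"
    and small: "\<forall>z\<in>C. z \<noteq> {} \<longrightarrow> card I < card z"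
  shows "(\<lambda>y. y \<inter> I) ` orth U C = Pow I"
proof -
  define D where "D = orth U C"
  define P where "P = (\<lambda>y. y \<inter> I) ` D"
  have D: "gf2_space U D" unfolding D_def by (rule gf2_space_orth[OF U])
  have fI: "finite I" using I U finite_subset by blast
  have P: "gf2_space I P" unfolding gf2_space_def P_def
  proof (intro conjI ballI)
    show "{} \<in> (\<lambda>y. y \<inter> I) ` D" using D unfolding gf2_space_def by force
    fix a b assume "a \<in> (\<lambda>y. y \<inter> I) ` D" "b \<in> (\<lambda>y. y \<inter> I) ` D"
    then obtain a' b' where ab: "a' \<in> D" "b' \<in> D" "a = a' \<inter> I" "b = b' \<inter> I" by auto
    hence "(a - b) \<union> (b - a) = ((a' - b') \<union> (b' - a')) \<inter> I" by auto
    moreover have "(a' - b') \<union> (b' - a') \<in> D" using D ab unfolding gf2_space_def by auto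
    ultimately show "(a - b) \<union> (b - a) \<in> (\<lambda>y. y \<inter> I) ` D" by auto
  qed auto
  have "orth I P \<subseteq> {{}}"
  proof
    fix z assume z: "z \<in> orth I P"
    hence zI: "z \<subseteq> I" unfolding orth_def by auto
    have "even (card (y \<inter> z))" if "y \<in> D" for y
    proof -
      have "y \<inter> I \<in> P" using that unfolding P_def by auto
      hence "even (card ((y \<inter> I) \<inter> z))" using z unfolding orth_def by auto
      moreover have "(y \<inter> I) \<inter> z = y \<inter> z" using zI by auto
      ultimately show ?thesis by simp
    qed
    hence "z \<in> orth U D" using zI I unfolding orth_def by auto
    hence "z \<in> C" using orth_orth[OF C U] unfolding D_def by simp
    moreover have "card z \<le> card I" using zI fI card_mono by blast
    ultimately show "z \<in> {{}}" using small by force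
  qed
  hence "orth I P = {{}}" by (auto simp: orth_def)
  hence "card P = card (Pow I)" using card_orth[OF P fI] by (simp add: card_Pow fI)
  moreover have "P \<subseteq> Pow I" unfolding P_def by auto
  ultimately show ?thesis using fI unfolding P_def D_def by (simp add: card_subset_eq)
qed

section \<open>Dual codes\<close>

lemma card_dual_code:
  assumes "binary_linear_code n C" and "card C = 2 ^ k"
  shows "card (dual_code n C) = 2 ^ (n - k)"
proof -
  have C: "gf2_space {0..<n} C" using assms(1) binary_linear_code_iff by simp
  have prod: "2 ^ k * card (dual_code n C) = 2 ^ n"
    using card_orth[OF C] assms(2) by (simp add: dual_code_eq_orth)
  hence "k \<le> n"
    by (metis (no_types, lifting) dvd_triv_left nat_dvd_not_less not_less one_less_numeral_iff
        power_dvd_imp_le semiring_norm(76) zero_less_numeral zero_less_power)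
  hence "(2::nat) ^ k * card (dual_code n C) = 2 ^ k * 2 ^ (n - k)"
    using prod by (simp flip: power_add)
  thus ?thesis by simp
qed

lemma min_dist_le: "z \<in> C \<Longrightarrow> z \<noteq> {} \<Longrightarrow> min_dist C \<le> card z"
  unfolding min_dist_def by (rule wellorder_Inf_le1) auto

lemma dual_codeword_resolves:
  assumes "binary_linear_code n C" and I: "I \<subseteq> {0..<n}" "card I < min_dist C" and j: "j \<in> I"
  shows "\<exists>y\<in>dual_code n C. y \<inter> I = {j}"
proof -
  have "\<forall>z\<in>C. z \<noteq> {} \<longrightarrow> card I < card z" using I min_dist_le by fastforce
  hence "(\<lambda>y. y \<inter> I) ` dual_code n C = Pow I"
    using orth_restrict_surj assms(1) I by (simp add: binary_linear_code_iff dual_code_eq_orth)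
  thus ?thesis using j by (metis (no_types, lifting) Pow_iff empty_subsetI image_iff insert_subset)
qed

section \<open>Row spaces\<close>

lemma row_sum_empty: "row_sum H {} = {}"
  unfolding row_sum_def by auto

lemma row_sum_single: "row_sum H {i} = H ! i"
proof -
  have "{i'\<in>{i}. j \<in> H ! i'} = (if j \<in> H ! i then {i} else {})" for j by auto
  thus ?thesis unfolding row_sum_def by auto
qed

lemma row_sum_insert:
  assumes "finite I" "i \<notin> I"
  shows "row_sum H (insert i I) = (row_sum H I - H ! i) \<union> (H ! i - row_sum H I)"
proof -
  have "card {i'\<in>insert i I. j \<in> H ! i'} = card {i'\<in>I. j \<in> H ! i'} + (if j \<in> H ! i then 1 else 0)"
    for j
  proof (cases "j \<in> H ! i")
    case True
    hence "{i'\<in>insert i I. j \<in> H ! i'} = insert i {i'\<in>I. j \<in> H ! i'}" by auto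
    thus ?thesis using assms True by simp
  next
    case False
    hence "{i'\<in>insert i I. j \<in> H ! i'} = {i'\<in>I. j \<in> H ! i'}" by auto
    thus ?thesis using False by simp
  qed
  thus ?thesis unfolding row_sum_def by auto
qed

lemma row_sum_in_space:
  assumes D: "gf2_space U D" and rows: "set H \<subseteq> D" and I: "I \<subseteq> {0..<length H}"
  shows "row_sum H I \<in> D"
proof -
  have "finite I" using I finite_subset by blast
  thus ?thesis using I
  proof (induction I rule: finite_induct)
    case empty thus ?case using D by (simp add: row_sum_empty gf2_space_def)
  next
    case (insert i I)
    hence "row_sum H I \<in> D" "H ! i \<in> D" using rows by auto
    thus ?case using D insert by (simp add: row_sum_insert gf2_space_def)
  qed
qed

lemma rows_in_row_space: "set H \<subseteq> row_space H"
proof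
  fix r assume "r \<in> set H"
  then obtain i where "i < length H" "H ! i = r" by (metis in_set_conv_nth)
  thus "r \<in> row_space H" unfolding row_space_def using row_sum_single[of H i] by force
qed

lemma row_space_of_list:
  assumes "gf2_space U D" and "set H = D"
  shows "row_space H = D"
  using row_sum_in_space[OF assms(1)] rows_in_row_space[of H] assms(2)
  unfolding row_space_def by auto

lemma card_row_space: "card (row_space H) \<le> 2 ^ length H"
proof -
  have "row_space H = row_sum H ` Pow {0..<length H}" unfolding row_space_def by auto
  hence "card (row_space H) \<le> card (Pow {0..<length H})" by (simp add: card_image_le)
  thus ?thesis by (simp add: card_Pow)
qed

lemma parity_check_rows_in_dual:
  "parity_check_matrix n C H \<Longrightarrow> set H \<subseteq> dual_code n C"
  using rows_in_row_space unfolding parity_check_matrix_def by blast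

lemma parity_check_length_ge:
  assumes "binary_linear_code n C" "card C = 2 ^ k" "parity_check_matrix n C H"
  shows "n - k \<le> length H"
proof -
  have "(2::nat) ^ (n - k) \<le> 2 ^ length H"
    using card_row_space[of H] assms card_dual_code unfolding parity_check_matrix_def by simp
  thus ?thesis by (simp add: power_le_imp_le_exp)
qed

lemma dual_list_parity_check:
  assumes "binary_linear_code n C" and "set H = dual_code n C"
  shows "parity_check_matrix n C H"
proof -
  have "gf2_space {0..<n} (dual_code n C)" by (simp add: dual_code_eq_orth gf2_space_orth)
  thus ?thesis using assms(2) row_space_of_list unfolding parity_check_matrix_def gf2_space_def
    by metis
qed

section \<open>Counting sets met in exactly one point\<close>

text \<open>one_hit n s w is the number of (s+1)-subsets of an n-set meeting a fixed w-set in
  exactly one point.  As a function of w it increases while (w+1)(s+1) \<le> n+1 and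
  decreases afterwards, so it is maximal at w = n div (s+1).\<close>

definition one_hit :: "nat \<Rightarrow> nat \<Rightarrow> nat \<Rightarrow> nat" where
  "one_hit n s w = w * ((n - w) choose s)"

lemma one_hit_succ_identity:
  assumes "w + 1 \<le> n"
  obtains m where "n - w = Suc m" "n = w + 1 + m"
    "(Suc m - s) * (Suc m choose s) = Suc m * (m choose s)"
proof -
  obtain m where m: "n = w + 1 + m" using assms le_Suc_ex by blast
  have "(Suc m - s) * (Suc m choose s) = Suc m * ((Suc m - 1) choose s)"
    by (rule binomial_absorb_comp)
  thus ?thesis using m that by auto
qed

lemma one_hit_step_up:
  assumes "w + 1 \<le> n" "(w + 1) * (s + 1) \<le> n + 1"
  shows "one_hit n s w \<le> one_hit n s (w + 1)"
proof -
  obtain m where m: "n - w = Suc m" "n = w + 1 + m"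
    and id: "(Suc m - s) * (Suc m choose s) = Suc m * (m choose s)"
    using one_hit_succ_identity assms(1) by blast
  show ?thesis
  proof (cases "s \<le> Suc m")
    case True
    then obtain t where t: "Suc m = t + s" using le_Suc_ex by (metis add.commute)
    have "w * s \<le> t" using assms(2) m t by (simp add: algebra_simps)
    hence ineq: "w * Suc m \<le> (w + 1) * t" using t by (simp add: algebra_simps)
    have "Suc m * (w * (Suc m choose s)) = (w * Suc m) * (Suc m choose s)" by (simp only: mult_ac)
    also have "\<dots> \<le> ((w + 1) * t) * (Suc m choose s)" using ineq by (rule mult_right_mono) simp
    also have "\<dots> = (w + 1) * ((Suc m - s) * (Suc m choose s))" using t by (simp add: algebra_simps)
    also have "\<dots> = (w + 1) * (Suc m * (m choose s))" using id by simp
    also have "\<dots> = Suc m * ((w + 1) * (m choose s))" by (simp only: mult_ac)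
    finally have "w * (Suc m choose s) \<le> (w + 1) * (m choose s)"
      by (simp only: Suc_mult_le_cancel1)
    thus ?thesis unfolding one_hit_def using m by simp
  next
    case False
    thus ?thesis unfolding one_hit_def using m by (simp add: binomial_eq_0)
  qed
qed

lemma one_hit_step_down:
  assumes "w + 1 \<le> n" "n + 1 \<le> (w + 1) * (s + 1)"
  shows "one_hit n s (w + 1) \<le> one_hit n s w"
proof -
  obtain m where m: "n - w = Suc m" "n = w + 1 + m"
    and id: "(Suc m - s) * (Suc m choose s) = Suc m * (m choose s)"
    using one_hit_succ_identity assms(1) by blast
  show ?thesis
  proof (cases "s \<le> Suc m")
    case True
    then obtain t where t: "Suc m = t + s" using le_Suc_ex by (metis add.commute)
    have "t \<le> w * s" using assms(2) m t by (simp add: algebra_simps)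
    hence ineq: "(w + 1) * t \<le> w * Suc m" using t by (simp add: algebra_simps)
    have "Suc m * ((w + 1) * (m choose s)) = (w + 1) * ((Suc m - s) * (Suc m choose s))"
      using id by (simp only: mult_ac)
    also have "\<dots> = ((w + 1) * t) * (Suc m choose s)" using t by (simp add: algebra_simps)
    also have "\<dots> \<le> (w * Suc m) * (Suc m choose s)" using ineq by (rule mult_right_mono) simp
    also have "\<dots> = Suc m * (w * (Suc m choose s))" by (simp only: mult_ac)
    finally have "(w + 1) * (m choose s) \<le> w * (Suc m choose s)"
      by (simp only: Suc_mult_le_cancel1)
    thus ?thesis unfolding one_hit_def using m by simp
  next
    case False
    thus ?thesis unfolding one_hit_def using m by (simp add: binomial_eq_0)
  qed
qed

lemma one_hit_mono_up:
  assumes "a \<le> b" "b * (s + 1) \<le> n"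
  shows "one_hit n s a \<le> one_hit n s b"
  using assms
proof (induction b)
  case (Suc b)
  show ?case
  proof (cases "a = Suc b")
    case False
    hence "one_hit n s a \<le> one_hit n s b" using Suc by (simp add: algebra_simps)
    moreover have "one_hit n s b \<le> one_hit n s (b + 1)"
      using Suc.prems(2) by (intro one_hit_step_up) (simp_all add: algebra_simps)
    ultimately show ?thesis by simp
  qed simp
qed simp

lemma one_hit_mono_down:
  assumes "a \<le> b" "b \<le> n" "n + 1 \<le> (a + 1) * (s + 1)"
  shows "one_hit n s b \<le> one_hit n s a"
  using assms
proof (induction b)
  case (Suc b)
  show ?case
  proof (cases "a = Suc b")
    case False
    hence ab: "a \<le> b" using Suc by simp
    hence "one_hit n s b \<le> one_hit n s a" using Suc by simp
    moreover have "(a + 1) * (s + 1) \<le> (b + 1) * (s + 1)" using ab by (intro mult_le_mono1) simp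
    hence "one_hit n s (b + 1) \<le> one_hit n s b" using one_hit_step_down[of b n s] Suc.prems by simp
    ultimately show ?thesis by simp
  qed simp
qed simp

lemma div_peak_bounds:
  fixes n \<sigma> :: nat
  assumes "\<sigma> \<ge> 1"
  shows "n div \<sigma> * \<sigma> \<le> n" "n + 1 \<le> (n div \<sigma> + 1) * \<sigma>"
proof -
  have dm: "n div \<sigma> * \<sigma> + n mod \<sigma> = n" by (rule div_mult_mod_eq)
  show "n div \<sigma> * \<sigma> \<le> n" using dm by linarith
  have "n mod \<sigma> < \<sigma>" using assms by simp
  moreover have "(n div \<sigma> + 1) * \<sigma> = n div \<sigma> * \<sigma> + \<sigma>" by simp
  ultimately show "n + 1 \<le> (n div \<sigma> + 1) * \<sigma>" using dm by linarith
qed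

lemma ceiling_minus_one_eq_div:
  assumes "\<sigma> \<ge> 1"
  shows "nat \<lceil>real (n + 1) / real \<sigma>\<rceil> - 1 = n div \<sigma>"
proof -
  let ?c = "n div \<sigma>"
  have sp: "real \<sigma> > 0" using assms by simp
  have "real (?c * \<sigma>) \<le> real n" using div_peak_bounds(1)[OF assms] by (simp only: of_nat_le_iff)
  hence below: "real ?c * real \<sigma> < real (n + 1)" by simp
  have "real (n + 1) \<le> real ((?c + 1) * \<sigma>)"
    using div_peak_bounds(2)[OF assms] by (simp only: of_nat_le_iff)
  hence above: "real (n + 1) \<le> (real ?c + 1) * real \<sigma>" by (simp add: algebra_simps)
  have "\<lceil>real (n + 1) / real \<sigma>\<rceil> = int (?c + 1)"
  proof (rule ceiling_unique)
    show "real_of_int (int (?c + 1)) - 1 < real (n + 1) / real \<sigma>"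
      using below sp by (simp add: less_divide_eq)
    show "real (n + 1) / real \<sigma> \<le> real_of_int (int (?c + 1))"
      using above sp by (simp add: divide_le_eq algebra_simps)
  qed
  thus ?thesis by simp
qed

text \<open>Among weights w \<le> n that are 0 or at least m, the count is maximised at max c m
  where c = n div (s+1): below c by the peak, above c by monotone decrease.\<close>
lemma one_hit_le_max_peak:
  assumes "w \<le> n" "w = 0 \<or> m \<le> w"
  shows "one_hit n s w \<le> one_hit n s (max (n div (s + 1)) m)"
proof -
  let ?c = "n div (s + 1)" and ?\<omega> = "max (n div (s + 1)) m"
  have peak: "n + 1 \<le> (?c + 1) * (s + 1)" using div_peak_bounds(2)[of "s + 1" n] by simp
  show ?thesis
  proof (cases "w = 0")
    case True thus ?thesis by (simp add: one_hit_def)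
  next
    case False
    show ?thesis
    proof (cases "?\<omega> \<le> w")
      case True
      have "n + 1 \<le> (?\<omega> + 1) * (s + 1)"
        using peak by (meson add_le_mono1 max.cobounded1 mult_le_mono1 order_trans)
      thus ?thesis using one_hit_mono_down[OF True assms(1)] by simp
    next
      case below: False
      hence "?\<omega> = ?c" "w \<le> ?c" using False assms(2) by auto
      moreover have "?c * (s + 1) \<le> n" using div_peak_bounds(1)[of "s + 1" n] by simp
      ultimately show ?thesis using one_hit_mono_up by simp
    qed
  qed
qed

section \<open>Stopping sets and resolved sets\<close>

definition resolved_sets :: "nat \<Rightarrow> nat \<Rightarrow> nat set \<Rightarrow> nat set set" where
  "resolved_sets n \<sigma> r = {I. I \<subseteq> {0..<n} \<and> card I = \<sigma> \<and> resolves r I}"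

text \<open>A resolved sigma-set is a point of r together with (sigma-1) points outside r.\<close>
lemma card_resolved_sets:
  assumes r: "r \<subseteq> {0..<n}" and \<sigma>: "\<sigma> \<ge> 1"
  shows "card (resolved_sets n \<sigma> r) \<le> one_hit n (\<sigma> - 1) (card r)"
proof -
  define S where "S = {T. T \<subseteq> {0..<n} - r \<and> card T = \<sigma> - 1}"
  let ?ins = "\<lambda>(j, T). insert j T"
  have fr: "finite r" using r finite_subset by blast
  have fS: "finite S" unfolding S_def by (rule finite_subset[of _ "Pow {0..<n}"]) auto
  have "resolved_sets n \<sigma> r \<subseteq> ?ins ` (r \<times> S)"
  proof
    fix I assume I: "I \<in> resolved_sets n \<sigma> r"
    then obtain j where j: "r \<inter> I = {j}"
      by (auto simp: resolved_sets_def resolves_def card_1_singleton_iff)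
    have "finite I" using I finite_subset by (auto simp: resolved_sets_def)
    moreover have "I - r = I - {j}" "j \<in> I" using j by auto
    ultimately have "I - r \<in> S" using I \<sigma> by (auto simp: S_def resolved_sets_def)
    moreover have "I = insert j (I - r)" "j \<in> r" using j by auto
    ultimately show "I \<in> ?ins ` (r \<times> S)" by (auto intro!: image_eqI[of _ _ "(j, I - r)"])
  qed
  hence "card (resolved_sets n \<sigma> r) \<le> card (?ins ` (r \<times> S))"
    using fr fS by (intro card_mono) auto
  also have "\<dots> \<le> card r * card S" by (metis card_cartesian_product card_image_le fS fr finite_SigmaI)
  also have "card S = (n - card r) choose (\<sigma> - 1)"
    using n_subsets[of "{0..<n} - r" "\<sigma> - 1"] r by (simp add: S_def card_Diff_subset fr)
  finally show ?thesis unfolding one_hit_def .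
qed

text \<open>Resolved sets of a dual codeword are at most as many as omega * binom(n-omega, sigma-1),
  since its weight is 0 or at least d^perp.\<close>
lemma card_resolved_sets_dual:
  assumes r: "r \<in> dual_code n C" and \<sigma>: "\<sigma> \<ge> 1"
  shows "card (resolved_sets n \<sigma> r) \<le> one_hit n (\<sigma> - 1) (omega n C \<sigma>)"
proof -
  have rU: "r \<subseteq> {0..<n}" using r by (simp add: dual_code_def)
  have w: "card r \<le> n" using card_mono[OF finite_atLeastLessThan rU] by simp
  have m: "card r = 0 \<or> min_dist (dual_code n C) \<le> card r"
    using min_dist_le[OF r] by fastforce
  have om: "omega n C \<sigma> = max (n div (\<sigma> - 1 + 1)) (min_dist (dual_code n C))"
    unfolding omega_def using ceiling_minus_one_eq_div[OF \<sigma>] \<sigma> by simp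
  have "one_hit n (\<sigma> - 1) (card r) \<le> one_hit n (\<sigma> - 1) (omega n C \<sigma>)"
    unfolding om by (rule one_hit_le_max_peak[OF w m])
  thus ?thesis using card_resolved_sets[OF rU \<sigma>] by simp
qed

lemma resolved_sets_cover:
  assumes sd: "enat l \<le> stopping_distance n H" and \<sigma>: "1 \<le> \<sigma>" "\<sigma> < l"
  shows "{I. I \<subseteq> {0..<n} \<and> card I = \<sigma>} \<subseteq> (\<Union>r\<in>set H. resolved_sets n \<sigma> r)"
proof
  fix I assume I: "I \<in> {I. I \<subseteq> {0..<n} \<and> card I = \<sigma>}"
  show "I \<in> (\<Union>r\<in>set H. resolved_sets n \<sigma> r)"
  proof (rule ccontr)
    assume "I \<notin> (\<Union>r\<in>set H. resolved_sets n \<sigma> r)"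
    hence "stopping_set n H I" using I \<sigma> by (auto simp: stopping_set_def resolved_sets_def)
    hence "stopping_distance n H \<le> enat \<sigma>"
      unfolding stopping_distance_def using I by (auto intro!: Inf_lower2)
    with sd have "enat l \<le> enat \<sigma>" by (rule order_trans)
    thus False using \<sigma> by simp
  qed
qed

lemma parity_check_covering_bound:
  assumes H: "parity_check_matrix n C H" and sd: "enat l \<le> stopping_distance n H"
    and \<sigma>: "1 \<le> \<sigma>" "\<sigma> < l"
  shows "n choose \<sigma> \<le> length H * one_hit n (\<sigma> - 1) (omega n C \<sigma>)"
proof -
  have "n choose \<sigma> = card {I. I \<subseteq> {0..<n} \<and> card I = \<sigma>}"
    using n_subsets[of "{0..<n}" \<sigma>] by simp
  also have "\<dots> \<le> card (\<Union>r\<in>set H. resolved_sets n \<sigma> r)"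
    by (rule card_mono[OF _ resolved_sets_cover[OF sd \<sigma>]])
      (auto intro: finite_subset[of _ "Pow {0..<n}"] simp: resolved_sets_def)
  also have "\<dots> \<le> (\<Sum>r\<in>set H. card (resolved_sets n \<sigma> r))" by (rule card_UN_le) simp
  also have "\<dots> \<le> (\<Sum>r\<in>set H. one_hit n (\<sigma> - 1) (omega n C \<sigma>))"
    using card_resolved_sets_dual[OF _ \<sigma>(1)] parity_check_rows_in_dual[OF H]
    by (intro sum_mono) blast
  also have "\<dots> \<le> length H * one_hit n (\<sigma> - 1) (omega n C \<sigma>)"
    by (simp add: card_length)
  finally show ?thesis .
qed

text \<open>The list of all dual codewords has stopping distance at least d: a smaller nonempty
  set is resolved by a dual codeword singling out one of its points.\<close>
lemma dual_list_stopping_distance: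
  assumes C: "binary_linear_code n C" and H: "dual_code n C \<subseteq> set H"
  shows "enat (min_dist C) \<le> stopping_distance n H"
  unfolding stopping_distance_def
proof (rule Inf_greatest, clarify)
  fix I assume st: "stopping_set n H I"
  then obtain j where I: "I \<subseteq> {0..<n}" "j \<in> I" and nr: "\<forall>r\<in>set H. \<not> resolves r I"
    unfolding stopping_set_def by auto
  show "enat (min_dist C) \<le> enat (card I)"
  proof (rule ccontr)
    assume "\<not> enat (min_dist C) \<le> enat (card I)"
    then obtain y where y: "y \<in> dual_code n C" "y \<inter> I = {j}"
      using dual_codeword_resolves[OF C I(1) _ I(2)] by auto
    hence "resolves y I" by (simp add: resolves_def)
    thus False using nr H y(1) by blast
  qed
qed

lemma stopping_redundancy_attained:
  assumes C: "binary_linear_code n C" and l: "l \<le> min_dist C"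
  obtains H where "length H = stopping_redundancy n C l" "parity_check_matrix n C H"
    "enat l \<le> stopping_distance n H"
proof -
  have "finite (dual_code n C)"
    using gf2_space_finite[OF gf2_space_orth] by (simp add: dual_code_eq_orth)
  then obtain H0 where H0: "set H0 = dual_code n C" using finite_list by blast
  have pc: "parity_check_matrix n C H0" by (rule dual_list_parity_check[OF C H0])
  have "enat l \<le> enat (min_dist C)" using l by simp
  also have "\<dots> \<le> stopping_distance n H0" using dual_list_stopping_distance[OF C] H0 by simp
  finally have sd: "enat l \<le> stopping_distance n H0" .
  have "\<exists>H. length H = stopping_redundancy n C l \<and> parity_check_matrix n C H
           \<and> stopping_distance n H \<ge> enat l"
    unfolding stopping_redundancy_def by (rule LeastI_ex) (use pc sd in blast)
  thus ?thesis using that by blast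
qed

lemma real_div_le_of_nat_le_mult:
  assumes "a \<le> m * b"
  shows "real a / real b \<le> real m"
proof (cases "b = 0")
  case False
  have "real a \<le> real (m * b)" using assms by (simp only: of_nat_le_iff)
  hence "real a \<le> real m * real b" by simp
  thus ?thesis using False by (simp add: divide_le_eq)
qed simp

theorem theorem2:
  fixes n k d l :: nat and C :: "nat set set"
  assumes "binary_linear_code n C"
    and "card C = 2 ^ k" and "k \<ge> 1"
    and "d = min_dist C"
    and "1 \<le> l" and "l \<le> d"
  shows "real (stopping_redundancy n C l) \<ge> real (n - k)
       \<and> (\<forall>\<sigma>\<in>{1..l-1}.
            real (stopping_redundancy n C l) \<ge>
              real (n choose \<sigma>) /
              (real (omega n C \<sigma>) * real ((n - omega n C \<sigma>) choose (\<sigma> - 1))))"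
proof -
  have l_le: "l \<le> min_dist C" using assms(4,6) by simp
  obtain H where len: "length H = stopping_redundancy n C l"
    and H: "parity_check_matrix n C H" and sd: "enat l \<le> stopping_distance n H"
    using stopping_redundancy_attained[OF assms(1) l_le] .
  have rank: "real (n - k) \<le> real (length H)"
    using parity_check_length_ge[OF assms(1,2) H] by (simp only: of_nat_le_iff)
  have cover: "\<forall>\<sigma>\<in>{1..l-1}. real (length H) \<ge>
      real (n choose \<sigma>) / (real (omega n C \<sigma>) * real ((n - omega n C \<sigma>) choose (\<sigma> - 1)))"
  proof
    fix \<sigma> :: nat assume "\<sigma> \<in> {1..l-1}"
    hence \<sigma>: "1 \<le> \<sigma>" "\<sigma> < l" using assms(5) by auto
    have "n choose \<sigma> \<le> length H * (omega n C \<sigma> * ((n - omega n C \<sigma>) choose (\<sigma> - 1)))"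
      using parity_check_covering_bound[OF H sd \<sigma>] by (simp only: one_hit_def)
    from real_div_le_of_nat_le_mult[OF this]
    show "real (length H) \<ge> real (n choose \<sigma>) /
        (real (omega n C \<sigma>) * real ((n - omega n C \<sigma>) choose (\<sigma> - 1)))"
      by (simp only: of_nat_mult)
  qed
  from rank cover show ?thesis unfolding len by (rule conjI)
qed

end
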